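(* Let $X$ be a topological space possessing an infinite metrizable gauge, let $\kappa$ be a regular cardinal with $\kappa\in\mathrm{MG}(X)$, let $A$ be a closed subset of $X$, let $G\in\mathcal{G}_\kappa$, let $S$ be a Dedekind complete g-characteristic subset of $G$, and let $h\in\mathrm{Ult}(X;S)$. Define $\Theta\colon X\times X\to S$ by $\Theta(x,y)=\min\{h(x,y),\max\{\varrho_{h,A}(x),\varrho_{h,A}(y)\}\}$. Then: (1) $\Theta$ is an $S$-pseudo-ultrametric on $X$, i.e. $\Theta(x,x)=0$, $\Theta\ge0$, $\Theta(x,y)=\Theta(y,x)$ and $\Theta(x,y)\le\max\{\Theta(x,z),\Theta(z,y)\}$ for all $x,y,z\in X$; (2) $\Theta(x,y)=0$ for all $x,y\in A$; (3) the restriction of $\Theta$ to $(X\setminus A)\times(X\setminus A)$ is an $S$-ultrametric on $X\setminus A$ generating the subspace topology of $X\setminus A$.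
   Context: A linearly ordered Abelian group is an Abelian group with a linear order compatible with addition. For $x,y\in G_{>0}$, $x\asymp y$ iff $y\le nx$ and $x\le my$ for some $n,m\in\mathbb{Z}_{\ge1}$; $\mathrm{Arc}(G)=G_{>0}/\asymp$, ordered by $[x]\preceq[y]$ iff ($nx<y$ for all $n$) or $x\asymp y$; $\mathrm{Arc}(G)^\perp$ is $\mathrm{Arc}(G)$ with a new least element adjoined. For a bottomed linearly ordered set $T$ (least element $\perp_T$, $T^*=T\setminus\{\perp_T\}$), $\chi(T)$ is the least cardinal $\kappa>0$ such that some strictly decreasing family $(s_\alpha)_{\alpha<\kappa}$ in $T^*$ has every $t\in T^*$ bounded below by some $s_\alpha$. A $G$-metric: $d\colon X^2\to G$, $d(x,y)=0\iff x=y$, $d\ge0$, symmetric, triangle inequality; $\mathrm{Met}(X;G)$ those generating the topology of $X$ via open balls. $\mathrm{MG}(X)$: cardinals $\kappa$ with some $G$, $\chi(\mathrm{Arc}(G)^\perp)=\kappa$, $\mathrm{Met}(X;G)\ne\emptyset$; infinite metrizable gauge: some $\kappa\in\mathrm{MG}(X)$ with $\kappa\ge\omega_0$. $\mathcal{G}_\kappa$: groups with $\chi(\mathrm{Arc}(G)^\perp)=\kappa$. A subset $S\subseteq G$ is g-characteristic if $S\subseteq G_{\ge 0}$, $0\in S$, and every $s\in G_{>0}$ has some $t\in S\setminus\{0\}$ with $t\le s$; $S$ is Dedekind complete if every non-empty subset of $S$ bounded above in $S$ has a supremum in $S$ (equivalently, every non-empty subset bounded below has an infimum in $S$). An $S$-ultrametric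 is $d\colon X^2\to S$ with $d(x,y)=0\iff x=y$, symmetric, $d(x,y)\le\max\{d(x,z),d(z,y)\}$; $\mathrm{Ult}(X;S)$ is the set of those generating the topology of $X$ via open balls of radii in $S\setminus\{0\}$. $\varrho_{h,A}(x)=\inf\{h(x,a):a\in A\}$, the infimum taken in $S$. *)

theory Defs
  imports "HOL-Analysis.Analysis"
begin

definition nsm :: "nat \<Rightarrow> 'g::ab_group_add \<Rightarrow> 'g" where
  "nsm n x = ((\<lambda>y. y + x) ^^ n) 0"

definition arc_equiv :: "'g::linordered_ab_group_add \<Rightarrow> 'g \<Rightarrow> bool" where
  "arc_equiv x y \<longleftrightarrow> (\<exists>n m. n \<ge> 1 \<and> m \<ge> 1 \<and> y \<le> nsm n x \<and> x \<le> nsm m y)"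

definition arc_class :: "'g::linordered_ab_group_add \<Rightarrow> 'g set" where
  "arc_class x = {y. 0 < y \<and> arc_equiv x y}"

definition Arc :: "'g::linordered_ab_group_add itself \<Rightarrow> 'g set set" where
  "Arc _ = arc_class ` {x. 0 < x}"

definition arc_le :: "'g::linordered_ab_group_add set \<Rightarrow> 'g set \<Rightarrow> bool" where
  "arc_le C D \<longleftrightarrow> (\<exists>x y. 0 < x \<and> 0 < y \<and> C = arc_class x \<and> D = arc_class y \<and>
       ((\<forall>n::nat. n \<ge> 1 \<longrightarrow> nsm n x < y) \<or> arc_equiv x y))"

text \<open>Cardinals are represented by cardinal orders (well-orders) k :: 'k rel;
  a family indexed by the ordinals below k is a map on Field k.
  For T = Arc(G)^perp we have T* = Arc(G).\<close>
definition coinitial_decr_family ::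
    "'t set \<Rightarrow> ('t \<Rightarrow> 't \<Rightarrow> bool) \<Rightarrow> 'k rel \<Rightarrow> ('k \<Rightarrow> 't) \<Rightarrow> bool" where
  "coinitial_decr_family Ts le k s \<longleftrightarrow>
     (\<forall>\<alpha>\<in>Field k. s \<alpha> \<in> Ts) \<and>
     (\<forall>\<alpha>\<in>Field k. \<forall>\<beta>\<in>Field k. (\<alpha>, \<beta>) \<in> k \<and> \<alpha> \<noteq> \<beta> \<longrightarrow> le (s \<beta>) (s \<alpha>) \<and> s \<beta> \<noteq> s \<alpha>) \<and>
     (\<forall>t\<in>Ts. \<exists>\<alpha>\<in>Field k. le (s \<alpha>) t)"

text \<open>chi(T) = k: k is a nonzero cardinal admitting such a family and no smaller
  cardinal does (every cardinal smaller than k is represented on a subset of the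
  field of k, hence by an order on the same type).\<close>
definition chi_is :: "'t set \<Rightarrow> ('t \<Rightarrow> 't \<Rightarrow> bool) \<Rightarrow> 'k rel \<Rightarrow> bool" where
  "chi_is Ts le k \<longleftrightarrow> Card_order k \<and> Field k \<noteq> {} \<and>
     (\<exists>s. coinitial_decr_family Ts le k s) \<and>
     (\<forall>r::'k rel. Card_order r \<and> Field r \<noteq> {} \<and> (r, k) \<in> ordLess \<longrightarrow>
        \<not> (\<exists>s. coinitial_decr_family Ts le r s))"

definition chi_Arc :: "'g::linordered_ab_group_add itself \<Rightarrow> 'k rel \<Rightarrow> bool" where
  "chi_Arc G k \<longleftrightarrow> chi_is (Arc G) arc_le k"

definition generates_topology :: "'a topology \<Rightarrow> ('a \<Rightarrow> 'a \<Rightarrow> 'g::linorder) \<Rightarrow> 'g set \<Rightarrow> bool" where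
  "generates_topology X d R \<longleftrightarrow>
     (\<forall>U. openin X U \<longleftrightarrow> U \<subseteq> topspace X \<and>
        (\<forall>x\<in>U. \<exists>r\<in>R. {y\<in>topspace X. d x y < r} \<subseteq> U))"

definition is_Gmetric :: "'a set \<Rightarrow> ('a \<Rightarrow> 'a \<Rightarrow> 'g::linordered_ab_group_add) \<Rightarrow> bool" where
  "is_Gmetric M d \<longleftrightarrow>
     (\<forall>x\<in>M. \<forall>y\<in>M. (d x y = 0 \<longleftrightarrow> x = y) \<and> 0 \<le> d x y \<and> d x y = d y x) \<and>
     (\<forall>x\<in>M. \<forall>y\<in>M. \<forall>z\<in>M. d x y \<le> d x z + d z y)"

definition Met :: "'a topology \<Rightarrow> ('a \<Rightarrow> 'a \<Rightarrow> 'g::linordered_ab_group_add) \<Rightarrow> bool" where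
  "Met X d \<longleftrightarrow> is_Gmetric (topspace X) d \<and> generates_topology X d {r. 0 < r}"

definition g_characteristic :: "'g::linordered_ab_group_add set \<Rightarrow> bool" where
  "g_characteristic S \<longleftrightarrow> S \<subseteq> {x. 0 \<le> x} \<and> 0 \<in> S \<and>
     (\<forall>s. 0 < s \<longrightarrow> (\<exists>t\<in>S - {0}. t \<le> s))"

definition is_sup_in :: "'g::linorder set \<Rightarrow> 'g set \<Rightarrow> 'g \<Rightarrow> bool" where
  "is_sup_in S B s \<longleftrightarrow> s \<in> S \<and> (\<forall>b\<in>B. b \<le> s) \<and> (\<forall>u\<in>S. (\<forall>b\<in>B. b \<le> u) \<longrightarrow> s \<le> u)"

definition is_inf_in :: "'g::linorder set \<Rightarrow> 'g set \<Rightarrow> 'g \<Rightarrow> bool" where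
  "is_inf_in S B s \<longleftrightarrow> s \<in> S \<and> (\<forall>b\<in>B. s \<le> b) \<and> (\<forall>u\<in>S. (\<forall>b\<in>B. u \<le> b) \<longrightarrow> u \<le> s)"

definition dedekind_complete :: "'g::linorder set \<Rightarrow> bool" where
  "dedekind_complete S \<longleftrightarrow>
     (\<forall>B. B \<subseteq> S \<and> B \<noteq> {} \<and> (\<exists>u\<in>S. \<forall>b\<in>B. b \<le> u) \<longrightarrow> (\<exists>s. is_sup_in S B s))"

definition is_S_ultrametric :: "'a set \<Rightarrow> 'g::linordered_ab_group_add set \<Rightarrow> ('a \<Rightarrow> 'a \<Rightarrow> 'g) \<Rightarrow> bool" where
  "is_S_ultrametric M S d \<longleftrightarrow>
     (\<forall>x\<in>M. \<forall>y\<in>M. d x y \<in> S \<and> (d x y = 0 \<longleftrightarrow> x = y) \<and> d x y = d y x) \<and>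
     (\<forall>x\<in>M. \<forall>y\<in>M. \<forall>z\<in>M. d x y \<le> max (d x z) (d z y))"

definition Ult :: "'a topology \<Rightarrow> 'g::linordered_ab_group_add set \<Rightarrow> ('a \<Rightarrow> 'a \<Rightarrow> 'g) \<Rightarrow> bool" where
  "Ult X S d \<longleftrightarrow> is_S_ultrametric (topspace X) S d \<and> generates_topology X d (S - {0})"

definition rho :: "'g::linorder set \<Rightarrow> ('a \<Rightarrow> 'a \<Rightarrow> 'g) \<Rightarrow> 'a set \<Rightarrow> 'a \<Rightarrow> 'g" where
  "rho S h A x = (THE r. is_inf_in S {h x a | a. a \<in> A} r)"

definition Theta :: "'g::linorder set \<Rightarrow> ('a \<Rightarrow> 'a \<Rightarrow> 'g) \<Rightarrow> 'a set \<Rightarrow> 'a \<Rightarrow> 'a \<Rightarrow> 'g" where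
  "Theta S h A x y = min (h x y) (max (rho S h A x) (rho S h A y))"

end

theory Submission
  imports Defs
begin

text \<open>Since \<open>h\<close> is an ultrametric, \<open>\<rho> = \<rho>\<^sub>h\<^sub>,\<^sub>A\<close> satisfies
  \<open>\<rho>(x) \<le> max {h(x,y), \<rho>(y)}\<close>, and a short case analysis on the linear order then yields the
  strong triangle inequality for \<open>\<Theta>\<close>. As \<open>A\<close> is closed and the \<open>h\<close>-balls generate the topology,
  \<open>\<rho>(x) > 0\<close> off \<open>A\<close>; for radii \<open>e \<le> \<rho>(x)\<close> the \<open>\<Theta>\<close>-ball of \<open>x\<close> in \<open>X \<setminus> A\<close> is exactly the
  \<open>h\<close>-ball of \<open>x\<close> in \<open>X\<close>, so both generate the same topology on the open set \<open>X \<setminus> A\<close>.\<close>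

lemma is_inf_in_unique:
  fixes S :: "'g::linorder set"
  shows "is_inf_in S B s \<Longrightarrow> is_inf_in S B t \<Longrightarrow> s = t"
  unfolding is_inf_in_def by (meson antisym)

lemma dedekind_complete_is_inf_in_exists:
  fixes S :: "'g::linorder set"
  assumes "dedekind_complete S" and "B \<subseteq> S" and "B \<noteq> {}"
    and "z \<in> S" and "\<forall>b\<in>B. z \<le> b"
  shows "\<exists>s. is_inf_in S B s"
proof -
  define L where "L = {u\<in>S. \<forall>b\<in>B. u \<le> b}"
  have "L \<subseteq> S" "L \<noteq> {}" "\<exists>u\<in>S. \<forall>l\<in>L. l \<le> u"
    using assms(2-5) unfolding L_def by blast+
  then obtain s where "is_sup_in S L s"
    using assms(1) unfolding dedekind_complete_def by blast
  then have "is_inf_in S B s"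
    using assms(2) unfolding is_sup_in_def is_inf_in_def L_def by blast
  then show ?thesis ..
qed

lemma min_max_ultra_triangle:
  fixes hxy hxz hzy a b c :: "'a::linorder"
  assumes "hxy \<le> max hxz hzy"
    and "a \<le> max hxz c" and "c \<le> max hxz a" and "b \<le> max hzy c" and "c \<le> max hzy b"
  shows "min hxy (max a b) \<le> max (min hxz (max a c)) (min hzy (max c b))"
  using assms unfolding min_def max_def by (auto split: if_splits)

lemma generates_topology_open_subtopology:
  fixes d d' :: "'a \<Rightarrow> 'a \<Rightarrow> 'g::linorder"
  assumes gen: "generates_topology X d R" and M: "openin X M"
    and min_R: "\<And>e t. e \<in> R \<Longrightarrow> t \<in> R \<Longrightarrow> min e t \<in> R"
    and balls_eq: "\<And>x. x \<in> M \<Longrightarrow>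
      \<exists>t\<in>R. \<forall>e\<in>R. e \<le> t \<longrightarrow> {y\<in>M. d' x y < e} = {y\<in>topspace X. d x y < e}"
  shows "generates_topology (subtopology X M) d' R"
  unfolding generates_topology_def
proof (intro allI)
  fix U
  have top: "topspace (subtopology X M) = M"
    using M openin_subset by (auto simp: topspace_subtopology)
  have small_balls: "(\<exists>r\<in>R. {y\<in>topspace X. d x y < r} \<subseteq> U) \<longleftrightarrow>
      (\<exists>r\<in>R. {y\<in>M. d' x y < r} \<subseteq> U)" if "x \<in> M" for x
  proof -
    obtain t where t: "t \<in> R"
      and eq: "\<And>e. e \<in> R \<Longrightarrow> e \<le> t \<Longrightarrow> {y\<in>M. d' x y < e} = {y\<in>topspace X. d x y < e}"
      using balls_eq[OF \<open>x \<in> M\<close>] by blast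
    show ?thesis
    proof
      assume "\<exists>r\<in>R. {y\<in>topspace X. d x y < r} \<subseteq> U"
      then obtain r where r: "r \<in> R" "{y\<in>topspace X. d x y < r} \<subseteq> U" by blast
      have "{y\<in>M. d' x y < min r t} = {y\<in>topspace X. d x y < min r t}"
        by (rule eq[OF min_R[OF r(1) t] min.cobounded2])
      also have "\<dots> \<subseteq> U" using r(2) by auto
      finally show "\<exists>r\<in>R. {y\<in>M. d' x y < r} \<subseteq> U" using min_R r(1) t by blast
    next
      assume "\<exists>r\<in>R. {y\<in>M. d' x y < r} \<subseteq> U"
      then obtain r where r: "r \<in> R" "{y\<in>M. d' x y < r} \<subseteq> U" by blast
      have "{y\<in>topspace X. d x y < min r t} = {y\<in>M. d' x y < min r t}"
        by (rule eq[OF min_R[OF r(1) t] min.cobounded2, symmetric])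
      also have "\<dots> \<subseteq> U" using r(2) by auto
      finally show "\<exists>r\<in>R. {y\<in>topspace X. d x y < r} \<subseteq> U" using min_R r(1) t by blast
    qed
  qed
  have "openin (subtopology X M) U \<longleftrightarrow> U \<subseteq> M \<and> openin X U"
    using M openin_open_subtopology by blast
  also have "\<dots> \<longleftrightarrow> U \<subseteq> M \<and> (\<forall>x\<in>U. \<exists>r\<in>R. {y\<in>topspace X. d x y < r} \<subseteq> U)"
    using gen M openin_subset unfolding generates_topology_def by blast
  also have "\<dots> \<longleftrightarrow> U \<subseteq> M \<and> (\<forall>x\<in>U. \<exists>r\<in>R. {y\<in>M. d' x y < r} \<subseteq> U)"
    using small_balls by blast
  finally show "openin (subtopology X M) U \<longleftrightarrow>
      U \<subseteq> topspace (subtopology X M) \<and> (\<forall>x\<in>U. \<exists>r\<in>R. {y\<in>topspace (subtopology X M). d' x y < r} \<subseteq> U)"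
    unfolding top .
qed

locale closed_set_in_ultrametric_space =
  fixes X :: "'a topology" and S :: "'g::linordered_ab_group_add set"
    and h :: "'a \<Rightarrow> 'a \<Rightarrow> 'g" and A :: "'a set"
  assumes S_dc: "dedekind_complete S" and S_gc: "g_characteristic S"
    and h_Ult: "Ult X S h"
    and A_closed: "closedin X A" and A_ne: "A \<noteq> {}"
begin

lemma A_subset: "A \<subseteq> topspace X"
  using A_closed closedin_subset by blast

lemma open_complement: "openin X (topspace X - A)"
  using A_closed closedin_def by blast

lemma S_nonneg: "s \<in> S \<Longrightarrow> 0 \<le> s"
  using S_gc unfolding g_characteristic_def by auto

lemma zero_in_S: "0 \<in> S"
  using S_gc unfolding g_characteristic_def by auto

lemma h_generates_topology: "generates_topology X h (S - {0})"
  using h_Ult unfolding Ult_def by blast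

lemma
  assumes "x \<in> topspace X" and "y \<in> topspace X"
  shows h_in_S: "h x y \<in> S"
    and h_eq_0_iff: "h x y = 0 \<longleftrightarrow> x = y"
    and h_sym: "h x y = h y x"
  using assms h_Ult unfolding Ult_def is_S_ultrametric_def by blast+

lemma h_nonneg: "x \<in> topspace X \<Longrightarrow> y \<in> topspace X \<Longrightarrow> 0 \<le> h x y"
  using S_nonneg h_in_S by blast

lemma h_ultra:
  "x \<in> topspace X \<Longrightarrow> y \<in> topspace X \<Longrightarrow> z \<in> topspace X \<Longrightarrow> h x y \<le> max (h x z) (h z y)"
  using h_Ult unfolding Ult_def is_S_ultrametric_def by blast

lemma rho_is_inf_in:
  assumes x: "x \<in> topspace X"
  shows "is_inf_in S {h x a | a. a \<in> A} (rho S h A x)"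
proof -
  have "{h x a | a. a \<in> A} \<subseteq> S" "{h x a | a. a \<in> A} \<noteq> {}"
    "\<forall>b\<in>{h x a | a. a \<in> A}. 0 \<le> b"
    using h_in_S[OF x] h_nonneg[OF x] A_subset A_ne by blast+
  then obtain s where s: "is_inf_in S {h x a | a. a \<in> A} s"
    using dedekind_complete_is_inf_in_exists[OF S_dc _ _ zero_in_S] by blast
  then have "rho S h A x = s"
    unfolding rho_def using is_inf_in_unique by blast
  with s show ?thesis by simp
qed

lemma
  assumes "x \<in> topspace X"
  shows rho_in_S: "rho S h A x \<in> S"
    and rho_le: "a \<in> A \<Longrightarrow> rho S h A x \<le> h x a"
    and rho_greatest: "u \<in> S \<Longrightarrow> (\<And>a. a \<in> A \<Longrightarrow> u \<le> h x a) \<Longrightarrow> u \<le> rho S h A x"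
  using rho_is_inf_in[OF assms] unfolding is_inf_in_def by blast+

lemma rho_nonneg: "x \<in> topspace X \<Longrightarrow> 0 \<le> rho S h A x"
  using S_nonneg rho_in_S by blast

lemma rho_eq_0: "x \<in> A \<Longrightarrow> rho S h A x = 0"
  using rho_le[of x x] rho_nonneg[of x] h_eq_0_iff[of x x] A_subset by auto

lemma rho_pos:
  assumes x: "x \<in> topspace X - A"
  shows "0 < rho S h A x"
proof -
  obtain e where e: "e \<in> S - {0}" and ball: "{y\<in>topspace X. h x y < e} \<subseteq> topspace X - A"
    using h_generates_topology open_complement x unfolding generates_topology_def by blast
  have "e \<le> h x a" if a: "a \<in> A" for a
  proof (rule ccontr)
    assume "\<not> e \<le> h x a"
    then have "a \<in> {y\<in>topspace X. h x y < e}" using a A_subset by auto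
    with ball a show False by blast
  qed
  then have "e \<le> rho S h A x"
    using x e by (intro rho_greatest) auto
  moreover have "0 < e" using e S_nonneg[of e] by auto
  ultimately show ?thesis by simp
qed

lemma rho_le_max:
  assumes x: "x \<in> topspace X" and y: "y \<in> topspace X"
  shows "rho S h A x \<le> max (h x y) (rho S h A y)"
proof (rule ccontr)
  assume c: "\<not> ?thesis"
  then obtain a where a: "a \<in> A" "h y a < rho S h A x"
    using rho_greatest[OF y rho_in_S[OF x]] by (meson le_max_iff_disj not_le)
  have "rho S h A x \<le> h x a" using rho_le[OF x a(1)] .
  also have "\<dots> \<le> max (h x y) (h y a)" using h_ultra x y a(1) A_subset by blast
  finally show False using c a(2) by (metis le_max_iff_disj max_less_iff_conj not_le)
qed

lemma
  assumes x: "x \<in> topspace X" and y: "y \<in> topspace X"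
  shows Theta_in_S: "Theta S h A x y \<in> S"
    and Theta_nonneg: "0 \<le> Theta S h A x y"
    and Theta_sym: "Theta S h A x y = Theta S h A y x"
  using h_in_S[OF x y] rho_in_S[OF x] rho_in_S[OF y] h_nonneg[OF x y] rho_nonneg[OF x]
    h_sym[OF x y]
  by (auto simp: Theta_def min_def max_def le_max_iff_disj)

lemma Theta_self: "x \<in> topspace X \<Longrightarrow> Theta S h A x x = 0"
  using h_eq_0_iff[of x x] rho_nonneg[of x] by (simp add: Theta_def min_def)

lemma Theta_ultra:
  assumes x: "x \<in> topspace X" and y: "y \<in> topspace X" and z: "z \<in> topspace X"
  shows "Theta S h A x y \<le> max (Theta S h A x z) (Theta S h A z y)"
  unfolding Theta_def
proof (rule min_max_ultra_triangle)
  show "h x y \<le> max (h x z) (h z y)" using h_ultra[OF x y z] .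
  show "rho S h A x \<le> max (h x z) (rho S h A z)" "rho S h A z \<le> max (h x z) (rho S h A x)"
    using rho_le_max x z h_sym by metis+
  show "rho S h A y \<le> max (h z y) (rho S h A z)" "rho S h A z \<le> max (h z y) (rho S h A y)"
    using rho_le_max y z h_sym by metis+
qed

lemma Theta_eq_0_on_A:
  assumes "x \<in> A" and "y \<in> A"
  shows "Theta S h A x y = 0"
proof -
  have "0 \<le> h x y" using assms A_subset h_nonneg by blast
  then show ?thesis using assms by (simp add: Theta_def rho_eq_0)
qed

lemma Theta_eq_0_iff:
  assumes x: "x \<in> topspace X - A" and y: "y \<in> topspace X - A"
  shows "Theta S h A x y = 0 \<longleftrightarrow> x = y"
proof
  assume Theta_0: "Theta S h A x y = 0"
  show "x = y"
  proof (rule ccontr)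
    assume "x \<noteq> y"
    with x y have "0 < h x y"
      using h_eq_0_iff h_nonneg by (metis DiffD1 order.not_eq_order_implies_strict)
    moreover have "0 < max (rho S h A x) (rho S h A y)"
      using rho_pos[OF x] by (simp add: less_max_iff_disj)
    ultimately have "0 < Theta S h A x y" by (simp add: Theta_def)
    with Theta_0 show False by simp
  qed
qed (use x Theta_self in auto)

text \<open>An \<open>h\<close>-ball of radius at most \<open>\<rho>(x)\<close> misses \<open>A\<close>, and inside it the minimum defining
  \<open>\<Theta>\<close> is attained by \<open>h\<close>.\<close>

lemma Theta_ball_eq_h_ball:
  assumes x: "x \<in> topspace X - A" and e: "e \<le> rho S h A x"
  shows "{y \<in> topspace X - A. Theta S h A x y < e} = {y \<in> topspace X. h x y < e}"
proof (intro set_eqI iffI)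
  fix y assume "y \<in> {y \<in> topspace X - A. Theta S h A x y < e}"
  then have "y \<in> topspace X" "min (h x y) (max (rho S h A x) (rho S h A y)) < e"
    by (auto simp: Theta_def)
  with e show "y \<in> {y \<in> topspace X. h x y < e}"
    by (auto simp: min_def max_def split: if_splits)
next
  fix y assume y: "y \<in> {y \<in> topspace X. h x y < e}"
  then have "y \<notin> A" using rho_le x e by (metis DiffD1 mem_Collect_eq not_le order_trans)
  moreover have "Theta S h A x y < e" using y by (simp add: Theta_def min_less_iff_disj)
  ultimately show "y \<in> {y \<in> topspace X - A. Theta S h A x y < e}" using y by blast
qed

lemma Theta_is_S_ultrametric: "is_S_ultrametric (topspace X - A) S (Theta S h A)"
  unfolding is_S_ultrametric_def
  using Theta_in_S Theta_eq_0_iff Theta_sym Theta_ultra by blast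

lemma Theta_generates_topology:
  "generates_topology (subtopology X (topspace X - A)) (Theta S h A) (S - {0})"
proof (rule generates_topology_open_subtopology[OF h_generates_topology open_complement])
  show "min e t \<in> S - {0}" if "e \<in> S - {0}" "t \<in> S - {0}" for e t
    using that by (simp add: min_def)
  show "\<exists>t\<in>S - {0}. \<forall>e\<in>S - {0}. e \<le> t \<longrightarrow>
      {y \<in> topspace X - A. Theta S h A x y < e} = {y \<in> topspace X. h x y < e}"
    if x: "x \<in> topspace X - A" for x
    using rho_in_S rho_pos[OF x] x Theta_ball_eq_h_ball[OF x] by force
qed

end

theorem proposition4p2:
  fixes X :: "'a topology"
    and lam :: "'l rel" and d1 :: "'a \<Rightarrow> 'a \<Rightarrow> 'g1::linordered_ab_group_add"
    and k :: "'k rel" and d2 :: "'a \<Rightarrow> 'a \<Rightarrow> 'g2::linordered_ab_group_add"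
    and A :: "'a set" and S :: "'g::linordered_ab_group_add set"
    and h :: "'a \<Rightarrow> 'a \<Rightarrow> 'g"
  assumes gauge_chi: "chi_Arc TYPE('g1) lam" and gauge_inf: "infinite (Field lam)"
    and gauge_met: "Met X d1"
    and k_card: "Card_order k" and k_regular: "regularCard k"
    and k_MG_chi: "chi_Arc TYPE('g2) k" and k_MG_met: "Met X d2"
    and A_closed: "closedin X A" and A_ne: "A \<noteq> {}"
    and G_k: "chi_Arc TYPE('g) k"
    and S_dc: "dedekind_complete S" and S_gc: "g_characteristic S"
    and h_Ult: "Ult X S h"
  shows "(\<forall>x\<in>topspace X. \<forall>y\<in>topspace X. \<forall>z\<in>topspace X.
            Theta S h A x y \<in> S \<and> Theta S h A x x = 0 \<and> 0 \<le> Theta S h A x y \<and>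
            Theta S h A x y = Theta S h A y x \<and>
            Theta S h A x y \<le> max (Theta S h A x z) (Theta S h A z y))
       \<and> (\<forall>x\<in>A. \<forall>y\<in>A. Theta S h A x y = 0)
       \<and> Ult (subtopology X (topspace X - A)) S (Theta S h A)"
proof -
  interpret closed_set_in_ultrametric_space X S h A
    using S_dc S_gc h_Ult A_closed A_ne by unfold_locales
  have "topspace (subtopology X (topspace X - A)) = topspace X - A" by auto
  then have "Ult (subtopology X (topspace X - A)) S (Theta S h A)"
    unfolding Ult_def using Theta_is_S_ultrametric Theta_generates_topology by simp
  then show ?thesis
    using Theta_in_S Theta_self Theta_nonneg Theta_sym Theta_ultra Theta_eq_0_on_A by simp
qed

end
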